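(* Let $r$ and $t$ be positive integers with $r\ge 3$ and $2\le t\le \frac{r+4}{4}$, and let $n=3r-t$. If $\rho_2(K(n,r))\ge 5$, then there exists a $2$-packing $S$ of $K(n,r)$ with $|S|=5$ such that $i_x(S)\le 2$ for every $x\in[n]$.
   Context: For integers $n\ge 2r$, the Kneser graph $K(n,r)$ has as vertices the $r$-element subsets of $[n]=\{1,\dots,n\}$, two vertices being adjacent iff they are disjoint. A $2$-packing of a graph $G$ is a set of vertices pairwise at distance at least $3$ in $G$; $\rho_2(G)$ is the maximum cardinality of a $2$-packing. For a set $S$ of vertices of $K(n,r)$ and $x\in[n]$, $i_x(S)=|\{u\in S: x\in u\}|$ is the number of vertices of $S$ containing $x$. *)

theory Defs
  imports Main "HOL-Library.Extended_Nat"
begin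

definition kneser_vertices :: "nat \<Rightarrow> nat \<Rightarrow> nat set set" where
  "kneser_vertices n r = {u. u \<subseteq> {1..n} \<and> card u = r}"

definition kneser_adj :: "nat \<Rightarrow> nat \<Rightarrow> nat set \<Rightarrow> nat set \<Rightarrow> bool" where
  "kneser_adj n r u v \<longleftrightarrow> u \<in> kneser_vertices n r \<and> v \<in> kneser_vertices n r
      \<and> u \<noteq> v \<and> u \<inter> v = {}"

definition kneser_walk :: "nat \<Rightarrow> nat \<Rightarrow> nat set list \<Rightarrow> bool" where
  "kneser_walk n r ws \<longleftrightarrow> ws \<noteq> [] \<and> set ws \<subseteq> kneser_vertices n r
      \<and> (\<forall>i. Suc i < length ws \<longrightarrow> kneser_adj n r (ws ! i) (ws ! Suc i))"

definition kneser_dist :: "nat \<Rightarrow> nat \<Rightarrow> nat set \<Rightarrow> nat set \<Rightarrow> enat" where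
  "kneser_dist n r u v =
     (if \<exists>ws. kneser_walk n r ws \<and> hd ws = u \<and> last ws = v
      then enat (LEAST k. \<exists>ws. kneser_walk n r ws \<and> hd ws = u \<and> last ws = v
                               \<and> length ws = Suc k)
      else \<infinity>)"

definition two_packing :: "nat \<Rightarrow> nat \<Rightarrow> nat set set \<Rightarrow> bool" where
  "two_packing n r S \<longleftrightarrow> S \<subseteq> kneser_vertices n r
      \<and> (\<forall>u\<in>S. \<forall>v\<in>S. u \<noteq> v \<longrightarrow> kneser_dist n r u v \<ge> 3)"

definition rho2 :: "nat \<Rightarrow> nat \<Rightarrow> nat" where
  "rho2 n r = Max {card S | S. two_packing n r S}"

definition i_x :: "nat \<Rightarrow> nat set set \<Rightarrow> nat" where
  "i_x x S = card {u \<in> S. x \<in> u}"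

end

theory Submission
  imports Defs
begin

text \<open>
  In \<open>K(n,r)\<close> with \<open>n = 3r - t\<close>, two distinct vertices are at distance at least 3 iff they
  intersect and have no common neighbour, i.e. iff \<open>1 \<le> |u \<inter> v| \<le> t - 1\<close>. Bonferroni's
  inequality applied to five vertices of a 2-packing therefore gives \<open>5r \<le> n + 10(t - 1)\<close>.
  That is exactly the room needed for a pair design on five indices: reserve \<open>t - 1\<close> points
  for each of the ten pairs and \<open>r - 4(t - 1) \<ge> 0\<close> points for each single index, and let the
  \<open>i\<close>-th vertex consist of the points whose label contains \<open>i\<close>. These five vertices pairwise
  meet in exactly \<open>t - 1\<close> points, so they form a 2-packing, and no point lies in more than two.
\<close>

text \<open>The point \<open>(P, k)\<close> lies in block \<open>i\<close> iff \<open>i \<in> P\<close>; \<open>k\<close> numbers the \<open>a\<close> copies of a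
  pair label and the \<open>b\<close> copies of a singleton label.\<close>

definition pair_design_points :: "'i set \<Rightarrow> nat \<Rightarrow> nat \<Rightarrow> ('i set \<times> nat) set" where
  "pair_design_points I a b =
     {P. P \<subseteq> I \<and> card P = 2} \<times> {..<a} \<union> (\<lambda>i. {i}) ` I \<times> {..<b}"

definition pair_design :: "'i set \<Rightarrow> nat \<Rightarrow> nat \<Rightarrow> 'i \<Rightarrow> ('i set \<times> nat) set" where
  "pair_design I a b i = {P. P \<subseteq> I \<and> card P = 2 \<and> i \<in> P} \<times> {..<a} \<union> {{i}} \<times> {..<b}"

lemma card_pair_design_points:
  assumes "finite I"
  shows "card (pair_design_points I a b) = (card I choose 2) * a + card I * b"
proof -
  have "card ((\<lambda>i. {i}) ` I) = card I"
    by (rule card_image) (simp add: inj_on_def)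
  moreover have "{P. P \<subseteq> I \<and> card P = 2} \<inter> (\<lambda>i. {i}) ` I = {}"
    by auto
  ultimately show ?thesis
    unfolding pair_design_points_def
    by (subst card_Un_disjoint) (auto simp: card_cartesian_product n_subsets assms)
qed

lemma pair_design_subset_points:
  "i \<in> I \<Longrightarrow> pair_design I a b i \<subseteq> pair_design_points I a b"
  unfolding pair_design_def pair_design_points_def by auto

lemma card_pair_design:
  assumes "finite I" "i \<in> I"
  shows "card (pair_design I a b i) = (card I - 1) * a + b"
proof -
  have pairs: "{P. P \<subseteq> I \<and> card P = 2 \<and> i \<in> P} = (\<lambda>j. {i, j}) ` (I - {i})"
    using assms(2) by (auto simp: card_2_iff)
  have "card ((\<lambda>j. {i, j}) ` (I - {i})) = card I - 1"
    by (subst card_image) (auto simp: inj_on_def doubleton_eq_iff assms)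
  then show ?thesis
    unfolding pair_design_def pairs
    by (subst card_Un_disjoint) (auto simp: card_cartesian_product assms)
qed

lemma pair_design_Int:
  assumes "i \<in> I" "j \<in> I" "i \<noteq> j"
  shows "pair_design I a b i \<inter> pair_design I a b j = {{i, j}} \<times> {..<a}"
  using assms by (auto simp: pair_design_def card_2_iff)

lemma pair_design_multiplicity: "card {i \<in> I. y \<in> pair_design I a b i} \<le> 2"
proof (cases "\<exists>i. y \<in> pair_design I a b i")
  case True
  then have "finite (fst y)" "card (fst y) \<le> 2"
    by (auto simp: pair_design_def card_2_iff)
  moreover have "{i \<in> I. y \<in> pair_design I a b i} \<subseteq> fst y"
    by (auto simp: pair_design_def)
  ultimately show ?thesis
    by (meson card_mono order_trans)
next
  case False
  then show ?thesis by simp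
qed

lemma pair_design_embedding:
  assumes "finite I" "finite X" "(card I choose 2) * a + card I * b \<le> card X"
  obtains A where "\<And>i. i \<in> I \<Longrightarrow> A i \<subseteq> X"
    and "\<And>i. i \<in> I \<Longrightarrow> card (A i) = (card I - 1) * a + b"
    and "\<And>i j. i \<in> I \<Longrightarrow> j \<in> I \<Longrightarrow> i \<noteq> j \<Longrightarrow> card (A i \<inter> A j) = a"
    and "\<And>x. card {i \<in> I. x \<in> A i} \<le> 2"
proof -
  let ?U = "pair_design_points I a b" and ?D = "pair_design I a b"
  have "finite ?U"
    using assms(1) by (simp add: pair_design_points_def)
  with assms obtain f where f: "f ` ?U \<subseteq> X" "inj_on f ?U"
    using card_le_inj[of ?U X] by (auto simp: card_pair_design_points)
  have inj: "inj_on f (?D i)" if "i \<in> I" for i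
    using f(2) pair_design_subset_points[OF that] by (rule inj_on_subset)
  show ?thesis
  proof (rule that)
    show "f ` ?D i \<subseteq> X" if "i \<in> I" for i
      using f(1) pair_design_subset_points[OF that] by blast
    show "card (f ` ?D i) = (card I - 1) * a + b" if "i \<in> I" for i
      using card_image[OF inj[OF that]] card_pair_design[OF assms(1) that] by simp
    show "card (f ` ?D i \<inter> f ` ?D j) = a" if "i \<in> I" "j \<in> I" "i \<noteq> j" for i j
    proof -
      have "f ` ?D i \<inter> f ` ?D j = f ` (?D i \<inter> ?D j)"
        using inj_on_image_Int[OF f(2) pair_design_subset_points pair_design_subset_points] that
        by simp
      also have "\<dots> = f ` ({{i, j}} \<times> {..<a})"
        using that by (simp add: pair_design_Int)
      finally have "f ` ?D i \<inter> f ` ?D j = f ` ({{i, j}} \<times> {..<a})" .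
      moreover have "inj_on f ({{i, j}} \<times> {..<a})"
        using inj[OF that(1)] pair_design_Int[OF that, of a b] by (metis inf_le1 inj_on_subset)
      ultimately show ?thesis
        by (simp add: card_image card_cartesian_product)
    qed
    show "card {i \<in> I. x \<in> f ` ?D i} \<le> 2" for x
    proof (cases "x \<in> f ` ?U")
      case True
      then obtain y where y: "y \<in> ?U" "x = f y" by blast
      have "x \<in> f ` ?D i \<longleftrightarrow> y \<in> ?D i" if "i \<in> I" for i
        using y inj_on_image_mem_iff[OF f(2) y(1) pair_design_subset_points[OF that]] by simp
      then have "{i \<in> I. x \<in> f ` ?D i} = {i \<in> I. y \<in> ?D i}"
        by auto
      then show ?thesis
        using pair_design_multiplicity by simp
    next
      case False
      then have "{i \<in> I. x \<in> f ` ?D i} = {}"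
        using pair_design_subset_points by (metis (no_types, lifting) empty_Collect_eq image_mono subsetD)
      then show ?thesis
        by (metis card.empty zero_le)
    qed
  qed
qed

lemma sum_card_le_card_Union_pairwise_Int:
  assumes "finite F" "\<And>u. u \<in> F \<Longrightarrow> finite u"
    and "\<And>u v. u \<in> F \<Longrightarrow> v \<in> F \<Longrightarrow> u \<noteq> v \<Longrightarrow> card (u \<inter> v) \<le> c"
  shows "(\<Sum>u\<in>F. card u) \<le> card (\<Union>F) + (card F choose 2) * c"
  using assms
proof (induction F rule: finite_induct)
  case empty
  then show ?case by simp
next
  case (insert w F)
  have "card (w \<inter> \<Union>F) \<le> (\<Sum>v\<in>F. card (w \<inter> v))"
    unfolding Int_Union by (rule card_UN_le) (rule insert.hyps(1))
  also have "\<dots> \<le> card F * c"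
    using sum_bounded_above[of F "\<lambda>v. card (w \<inter> v)" c] insert.hyps(2) insert.prems(2) by force
  finally have overlap: "card (w \<inter> \<Union>F) \<le> card F * c" .
  have "card w + card (\<Union>F) = card (w \<union> \<Union>F) + card (w \<inter> \<Union>F)"
    using insert.prems(1) insert.hyps(1) by (intro card_Un_Int) auto
  moreover have "(\<Sum>u\<in>F. card u) \<le> card (\<Union>F) + (card F choose 2) * c"
    using insert.IH insert.prems by simp
  moreover have "Suc (card F) choose 2 = card F + (card F choose 2)"
    by (simp add: numeral_2_eq_2)
  ultimately show ?case
    using overlap insert.hyps by (simp add: add_mult_distrib)
qed

lemma kneser_dist_le_walk:
  assumes "kneser_walk n r ws"
  shows "kneser_dist n r (hd ws) (last ws) \<le> enat (length ws - 1)"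
proof -
  have "length ws = Suc (length ws - 1)"
    using assms by (simp add: kneser_walk_def)
  then have "(LEAST k. \<exists>vs. kneser_walk n r vs \<and> hd vs = hd ws \<and> last vs = last ws
                \<and> length vs = Suc k) \<le> length ws - 1"
    using assms by (intro Least_le) blast
  then show ?thesis
    using assms unfolding kneser_dist_def by auto
qed

lemma kneser_dist_ge_if_walks_longer:
  assumes "\<And>ws. kneser_walk n r ws \<Longrightarrow> hd ws = u \<Longrightarrow> last ws = v \<Longrightarrow> k < length ws"
  shows "enat k \<le> kneser_dist n r u v"
proof (cases "\<exists>ws. kneser_walk n r ws \<and> hd ws = u \<and> last ws = v")
  case True
  then have "\<exists>m ws. kneser_walk n r ws \<and> hd ws = u \<and> last ws = v \<and> length ws = Suc m"
    by (metis Suc_pred kneser_walk_def length_greater_0_conv)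
  then have "k \<le> (LEAST m. \<exists>ws. kneser_walk n r ws \<and> hd ws = u \<and> last ws = v
                    \<and> length ws = Suc m)"
    by (rule LeastI2_ex) (use assms in fastforce)
  with True show ?thesis
    unfolding kneser_dist_def by simp
next
  case False
  then show ?thesis
    unfolding kneser_dist_def if_not_P[OF False] by simp
qed

lemma kneser_dist_ge_3_iff:
  assumes "u \<noteq> v"
  shows "3 \<le> kneser_dist n r u v \<longleftrightarrow>
           \<not> kneser_adj n r u v \<and> \<not> (\<exists>w. kneser_adj n r u w \<and> kneser_adj n r w v)"
proof
  assume far: "3 \<le> kneser_dist n r u v"
  show "\<not> kneser_adj n r u v \<and> \<not> (\<exists>w. kneser_adj n r u w \<and> kneser_adj n r w v)"
  proof (intro conjI notI)
    assume "kneser_adj n r u v"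
    then have walk: "kneser_walk n r [u, v]"
      by (auto simp: kneser_walk_def kneser_adj_def less_Suc_eq)
    have "kneser_dist n r u v \<le> enat 1"
      using kneser_dist_le_walk[OF walk] by simp
    with far have "(3::enat) \<le> enat 1"
      by (rule order_trans)
    then show False
      by (simp add: numeral_eq_enat)
  next
    assume "\<exists>w. kneser_adj n r u w \<and> kneser_adj n r w v"
    then obtain w where "kneser_adj n r u w" "kneser_adj n r w v" by blast
    then have walk: "kneser_walk n r [u, w, v]"
      by (auto simp: kneser_walk_def kneser_adj_def less_Suc_eq nth_Cons')
    have "kneser_dist n r u v \<le> enat 2"
      using kneser_dist_le_walk[OF walk] by (simp add: numeral_2_eq_2)
    with far have "(3::enat) \<le> enat 2"
      by (rule order_trans)
    then show False
      by (simp add: numeral_eq_enat)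
  qed
next
  assume near: "\<not> kneser_adj n r u v \<and> \<not> (\<exists>w. kneser_adj n r u w \<and> kneser_adj n r w v)"
  have "3 < length ws" if ws: "kneser_walk n r ws" "hd ws = u" "last ws = v" for ws
  proof (rule ccontr)
    assume short: "\<not> 3 < length ws"
    have "ws \<noteq> []" and step: "\<And>i. Suc i < length ws \<Longrightarrow> kneser_adj n r (ws ! i) (ws ! Suc i)"
      using ws(1) by (auto simp: kneser_walk_def)
    then have "length ws = 1 \<or> length ws = 2 \<or> length ws = 3"
      using short length_greater_0_conv[of ws] by arith
    moreover have "ws ! 0 = u" "ws ! (length ws - 1) = v"
      using ws \<open>ws \<noteq> []\<close> by (auto simp: hd_conv_nth last_conv_nth)
    ultimately show False
      using assms near step[of 0] step[of 1] by (auto simp: numeral_eq_Suc)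
  qed
  then show "3 \<le> kneser_dist n r u v"
    using kneser_dist_ge_if_walks_longer[of n r u v 3] by (simp add: numeral_eq_enat)
qed

lemma kneser_common_neighbour_iff:
  assumes "u \<in> kneser_vertices n r" "v \<in> kneser_vertices n r" "u \<inter> v \<noteq> {}"
  shows "(\<exists>w. kneser_adj n r u w \<and> kneser_adj n r w v) \<longleftrightarrow> 3 * r \<le> n + card (u \<inter> v)"
proof -
  let ?C = "{1..n} - (u \<union> v)"
  have uv: "u \<union> v \<subseteq> {1..n}" "finite u" "finite v" "card u = r" "card v = r"
    using assms(1,2) by (auto simp: kneser_vertices_def intro: finite_subset)
  have "card ?C = n - card (u \<union> v)"
    using card_Diff_subset[OF finite_subset[OF uv(1)] uv(1)] by simp
  moreover have "card (u \<union> v) + card (u \<inter> v) = 2 * r"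
    using card_Un_Int[OF uv(2,3)] uv(4,5) by simp
  moreover have "card (u \<union> v) \<le> n"
    using card_mono[OF _ uv(1)] by simp
  ultimately have card_C: "card ?C + 2 * r = n + card (u \<inter> v)"
    by simp
  have "(\<exists>w. kneser_adj n r u w \<and> kneser_adj n r w v) \<longleftrightarrow> r \<le> card ?C"
  proof
    assume "\<exists>w. kneser_adj n r u w \<and> kneser_adj n r w v"
    then obtain w where "kneser_adj n r u w" "kneser_adj n r w v"
      by blast
    then have "w \<subseteq> ?C" "card w = r"
      by (auto simp: kneser_adj_def kneser_vertices_def)
    then show "r \<le> card ?C"
      by (metis card_mono finite_Diff finite_atLeastAtMost)
  next
    assume "r \<le> card ?C"
    then obtain w where w: "w \<subseteq> ?C" "card w = r"
      by (meson obtain_subset_with_card_n)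
    then have "w \<in> kneser_vertices n r"
      by (auto simp: kneser_vertices_def)
    moreover have "w \<noteq> u" "w \<noteq> v"
      using w(1) assms(3) by auto
    ultimately have "kneser_adj n r u w \<and> kneser_adj n r w v"
      using assms(1,2) w(1) by (auto simp: kneser_adj_def)
    then show "\<exists>w. kneser_adj n r u w \<and> kneser_adj n r w v" ..
  qed
  also have "\<dots> \<longleftrightarrow> 3 * r \<le> n + card (u \<inter> v)"
    using card_C by arith
  finally show ?thesis .
qed

lemma kneser_dist_ge_3_iff_Int:
  assumes "u \<in> kneser_vertices n r" "v \<in> kneser_vertices n r" "u \<noteq> v"
  shows "3 \<le> kneser_dist n r u v \<longleftrightarrow> u \<inter> v \<noteq> {} \<and> n + card (u \<inter> v) < 3 * r"
proof (cases "u \<inter> v = {}")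
  case True
  with assms have "kneser_adj n r u v"
    by (simp add: kneser_adj_def)
  with True show ?thesis
    using kneser_dist_ge_3_iff[OF assms(3)] by simp
next
  case False
  with assms have "\<not> kneser_adj n r u v"
    by (simp add: kneser_adj_def)
  moreover have "(\<exists>w. kneser_adj n r u w \<and> kneser_adj n r w v) \<longleftrightarrow> \<not> n + card (u \<inter> v) < 3 * r"
    using kneser_common_neighbour_iff[OF assms(1,2) False] by (simp add: not_less)
  ultimately show ?thesis
    using False kneser_dist_ge_3_iff[OF assms(3)] by blast
qed

lemma two_packing_iff_Int:
  "two_packing n r S \<longleftrightarrow> S \<subseteq> kneser_vertices n r \<and>
     (\<forall>u\<in>S. \<forall>v\<in>S. u \<noteq> v \<longrightarrow> u \<inter> v \<noteq> {} \<and> n + card (u \<inter> v) < 3 * r)"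
proof (cases "S \<subseteq> kneser_vertices n r")
  case True
  then have "3 \<le> kneser_dist n r u v \<longleftrightarrow> u \<inter> v \<noteq> {} \<and> n + card (u \<inter> v) < 3 * r"
    if "u \<in> S" "v \<in> S" "u \<noteq> v" for u v
    using kneser_dist_ge_3_iff_Int that by blast
  with True show ?thesis
    unfolding two_packing_def by auto
qed (simp add: two_packing_def)

lemma two_packing_subset: "two_packing n r S \<Longrightarrow> T \<subseteq> S \<Longrightarrow> two_packing n r T"
  unfolding two_packing_def by blast

lemma two_packing_finite: "two_packing n r S \<Longrightarrow> finite S"
  unfolding two_packing_def kneser_vertices_def
  by (rule finite_subset[of _ "Pow {1..n}"]) auto

lemma rho2_attained: "\<exists>S. two_packing n r S \<and> card S = rho2 n r"
proof -
  let ?C = "{card S | S. two_packing n r S}"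
  have "?C \<subseteq> {..card (Pow {1..n})}"
  proof
    fix c assume "c \<in> ?C"
    then obtain S where "two_packing n r S" "c = card S"
      by blast
    moreover from this have "S \<subseteq> Pow {1..n}"
      by (auto simp: two_packing_def kneser_vertices_def)
    ultimately show "c \<in> {..card (Pow {1..n})}"
      by (simp add: card_mono)
  qed
  then have "finite ?C"
    by (rule finite_subset) simp
  moreover have "two_packing n r {}"
    by (simp add: two_packing_def)
  ultimately have "rho2 n r \<in> ?C"
    unfolding rho2_def by (intro Max_in) auto
  then show ?thesis
    by auto
qed

lemma two_packing_card_bound:
  assumes "two_packing n r S"
  shows "card S * r \<le> n + (card S choose 2) * (3 * r - n - 1)"
proof -
  have S: "S \<subseteq> kneser_vertices n r" and
    overlap: "\<And>u v. u \<in> S \<Longrightarrow> v \<in> S \<Longrightarrow> u \<noteq> v \<Longrightarrow> n + card (u \<inter> v) < 3 * r"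
    using assms by (auto simp: two_packing_iff_Int)
  have fin: "\<And>u. u \<in> S \<Longrightarrow> finite u" and "\<Union>S \<subseteq> {1..n}"
    using S by (auto simp: kneser_vertices_def intro: finite_subset)
  then have "card (\<Union>S) \<le> n"
    using card_mono[of "{1..n}" "\<Union>S"] by simp
  have pair: "card (u \<inter> v) \<le> 3 * r - n - 1" if "u \<in> S" "v \<in> S" "u \<noteq> v" for u v
    using overlap[OF that] by linarith
  have "card S * r = (\<Sum>u\<in>S. card u)"
    using S by (simp add: kneser_vertices_def subset_iff)
  also have "\<dots> \<le> card (\<Union>S) + (card S choose 2) * (3 * r - n - 1)"
    using pair by (intro sum_card_le_card_Union_pairwise_Int two_packing_finite[OF assms] fin)
  also have "\<dots> \<le> n + (card S choose 2) * (3 * r - n - 1)"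
    using \<open>card (\<Union>S) \<le> n\<close> by simp
  finally show ?thesis .
qed

lemma exists_two_packing_multiplicity_le_2:
  assumes "0 < a" "a < r" "n + a < 3 * r"
    and "(m choose 2) * a + m * b \<le> n" "(m - 1) * a + b = r"
  shows "\<exists>S. two_packing n r S \<and> card S = m \<and> (\<forall>x. i_x x S \<le> 2)"
proof -
  obtain A where sub: "\<And>i. i < m \<Longrightarrow> A i \<subseteq> {1..n}"
    and card: "\<And>i. i < m \<Longrightarrow> card (A i) = r"
    and card_Int: "\<And>i j. i < m \<Longrightarrow> j < m \<Longrightarrow> i \<noteq> j \<Longrightarrow> card (A i \<inter> A j) = a"
    and mult: "\<And>x. card {i \<in> {..<m}. x \<in> A i} \<le> 2"
    using pair_design_embedding[of "{..<m}" "{1..n}" a b] assms(4,5) by auto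
  have "inj_on A {..<m}"
  proof (rule inj_onI, rule ccontr)
    fix i j assume "i \<in> {..<m}" "j \<in> {..<m}" "A i = A j" "i \<noteq> j"
    then show False
      using card[of i] card_Int[of i j] assms(2) by simp
  qed
  then have "card (A ` {..<m}) = m"
    by (simp add: card_image)
  moreover have "two_packing n r (A ` {..<m})"
  proof -
    have "A ` {..<m} \<subseteq> kneser_vertices n r"
      using sub card by (auto simp: kneser_vertices_def)
    moreover have "u \<inter> v \<noteq> {} \<and> n + card (u \<inter> v) < 3 * r"
      if "u \<in> A ` {..<m}" "v \<in> A ` {..<m}" "u \<noteq> v" for u v
    proof -
      from that obtain i j where "i < m" "j < m" "i \<noteq> j" "u = A i" "v = A j"
        by auto
      then have "card (u \<inter> v) = a"
        using card_Int by simp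
      with assms(1,3) show ?thesis
        by auto
    qed
    ultimately show ?thesis
      unfolding two_packing_iff_Int by blast
  qed
  moreover have "i_x x (A ` {..<m}) \<le> 2" for x
  proof -
    have "{u \<in> A ` {..<m}. x \<in> u} = A ` {i \<in> {..<m}. x \<in> A i}"
      by blast
    moreover have "card (A ` {i \<in> {..<m}. x \<in> A i}) \<le> card {i \<in> {..<m}. x \<in> A i}"
      by (rule card_image_le) simp
    ultimately show ?thesis
      using mult[of x] by (simp add: i_x_def)
  qed
  ultimately show ?thesis
    by blast
qed

theorem lemma4p7:
  fixes r t n :: nat
  assumes "r \<ge> 3" and "2 \<le> t" and "4 * t \<le> r + 4" and "n = 3 * r - t"
    and "rho2 n r \<ge> 5"
  shows "\<exists>S. two_packing n r S \<and> card S = 5 \<and> (\<forall>x\<in>{1..n}. i_x x S \<le> 2)"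
proof -
  obtain S where "two_packing n r S" "5 \<le> card S"
    using rho2_attained[of n r] assms(5) by auto
  then obtain T where T: "two_packing n r T" "card T = 5"
    by (meson obtain_subset_with_card_n two_packing_subset)
  have "3 * r - n - 1 = t - 1"
    using assms by simp
  then have "5 * r \<le> n + 10 * (t - 1)"
    using two_packing_card_bound[OF T(1)] by (simp add: T(2) choose_two)
  then have "\<exists>S. two_packing n r S \<and> card S = 5 \<and> (\<forall>x. i_x x S \<le> 2)"
    using assms
    by (intro exists_two_packing_multiplicity_le_2[where a = "t - 1" and b = "r - 4 * (t - 1)"])
      (simp_all add: choose_two)
  then show ?thesis
    by blast
qed

end
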